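(* In the While-language extended with non-deterministic input, for every command $c$ and stores $\sigma,\sigma'$: if $(c,\sigma)\to^\infty$ then $(c,\sigma,\Downarrow)\Rightarrow^{co}_G\sigma',\Uparrow$.
   Context: Extended While-language syntax: variables $x$ range over a countably infinite set $\mathit{Var}$; $n$ ranges over natural numbers; values are $v ::= \mathsf{null}\mid n$ ($\mathsf{null}$ distinct from every natural number); expressions are $e ::= v\mid x\mid e_1\oplus e_2\mid\mathsf{input}$ with $\oplus\in\{+,-,*\}$, where $\oplus(n_1,n_2)$ is the result of the operation on naturals; commands are $c ::= \mathsf{skip}\mid\mathsf{alloc}\ x\mid x:=e\mid c_1;c_2\mid \mathsf{if}\ e\ c_1\ c_2\mid\mathsf{while}\ e\ c$. A store $\sigma$ is a finite partial map from $\mathit{Var}$ to values, with domain $\mathrm{dom}(\sigma)$, lookup $\sigma(x)$, update $\sigma[x\mapsto v]$. Expression evaluation $(e,\sigma)\Rightarrow_E v$ is the least relation with: $(v,\sigma)\Rightarrow_E v$; $(x,\sigma)\Rightarrow_E\sigma(x)$ if $x\in\mathrm{dom}(\sigma)$; if $(e_1,\sigma)\Rightarrow_E n_1$ and $(e_2,\sigma)\Rightarrow_E n_2$ with $n_1,n_2$ naturals then $(e_1\oplus e_2,\sigma)\Rightarrow_E\oplus(n_1,n_2)$; and $(\mathsf{input},\sigma)\Rightarrow_E v$ for every value $v$. Small-step relation $(c,\sigma)\to(c',\sigma')$ is the least relation with: $(\mathsf{alloc}\ x,\sigma)\to(\mathsf{skip},\sigma[x\mapsto\mathsf{null}])$ if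 $x\notin\mathrm{dom}(\sigma)$; $(x:=e,\sigma)\to(\mathsf{skip},\sigma[x\mapsto v])$ if $x\in\mathrm{dom}(\sigma)$ and $(e,\sigma)\Rightarrow_E v$; $(c_1;c_2,\sigma)\to(c_1';c_2,\sigma')$ if $(c_1,\sigma)\to(c_1',\sigma')$; $(\mathsf{skip};c_2,\sigma)\to(c_2,\sigma)$; $(\mathsf{if}\ e\ c_1\ c_2,\sigma)\to(c_1,\sigma)$ if $(e,\sigma)\Rightarrow_E v$, $v\neq 0$; $(\mathsf{if}\ e\ c_1\ c_2,\sigma)\to(c_2,\sigma)$ if $(e,\sigma)\Rightarrow_E 0$; $(\mathsf{while}\ e\ c,\sigma)\to(c;\mathsf{while}\ e\ c,\sigma)$ if $(e,\sigma)\Rightarrow_E v$, $v\neq0$; $(\mathsf{while}\ e\ c,\sigma)\to(\mathsf{skip},\sigma)$ if $(e,\sigma)\Rightarrow_E 0$. The predicate $(c,\sigma)\to^\infty$ is coinductively defined (greatest predicate) by: if $(c,\sigma)\to(c',\sigma')$ and $(c',\sigma')\to^\infty$ then $(c,\sigma)\to^\infty$. Flag-based big-step semantics: status flags $\delta ::= \Downarrow\mid\Uparrow$. Expression evaluation $(e,\sigma,\delta)\Rightarrow_{GE}v,\delta'$ is the least relation with: $(v,\sigma,\Downarrow)\Rightarrow_{GE}v,\Downarrow$; $(x,\sigma,\Downarrow)\Rightarrow_{GE}\sigma(x),\Downarrow$ if $x\in\mathrm{dom}(\sigma)$; if $(e_1,\sigma,\Downarrow)\Rightarrow_{GE}n_1,\delta$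 and $(e_2,\sigma,\delta)\Rightarrow_{GE}n_2,\delta'$ ($n_1,n_2$ naturals) then $(e_1\oplus e_2,\sigma,\Downarrow)\Rightarrow_{GE}\oplus(n_1,n_2),\delta'$; $(\mathsf{input},\sigma,\Downarrow)\Rightarrow_{GE}v,\Downarrow$ for every value $v$; and $(e,\sigma,\Uparrow)\Rightarrow_{GE}v,\Uparrow$ for every value $v$. The command rules for judgments $(c,\sigma,\delta)\Rightarrow_G\sigma',\delta'$ are: $(\mathsf{skip},\sigma,\Downarrow)\Rightarrow_G\sigma,\Downarrow$; $(\mathsf{alloc}\ x,\sigma,\Downarrow)\Rightarrow_G\sigma[x\mapsto\mathsf{null}],\Downarrow$ if $x\notin\mathrm{dom}(\sigma)$; $(x:=e,\sigma,\Downarrow)\Rightarrow_G\sigma[x\mapsto v],\delta$ if $x\in\mathrm{dom}(\sigma)$ and $(e,\sigma,\Downarrow)\Rightarrow_{GE}v,\delta$; $(c_1;c_2,\sigma,\Downarrow)\Rightarrow_G\sigma'',\delta'$ if $(c_1,\sigma,\Downarrow)\Rightarrow_G\sigma',\delta$ and $(c_2,\sigma',\delta)\Rightarrow_G\sigma'',\delta'$; $(\mathsf{if}\ e\ c_1\ c_2,\sigma,\Downarrow)\Rightarrow_G\sigma',\delta'$ if $v\ne0$, $(e,\sigma,\Downarrow)\Rightarrow_{GE}v,\delta$ and $(c_1,\sigma,\delta)\Rightarrow_G\sigma',\delta'$; $(\mathsf{if}\ e\ c_1\ c_2,\sigma,\Downarrow)\Rightarrow_G\sigma',\delta'$ if $(e,\sigma,\Downarrow)\Rightarrow_{GE}0,\delta$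 and $(c_2,\sigma,\delta)\Rightarrow_G\sigma',\delta'$; $(\mathsf{while}\ e\ c,\sigma,\Downarrow)\Rightarrow_G\sigma'',\delta''$ if $(e,\sigma,\Downarrow)\Rightarrow_{GE}v,\delta$, $v\ne0$, $(c,\sigma,\delta)\Rightarrow_G\sigma',\delta'$ and $(\mathsf{while}\ e\ c,\sigma',\delta')\Rightarrow_G\sigma'',\delta''$; $(\mathsf{while}\ e\ c,\sigma,\Downarrow)\Rightarrow_G\sigma,\delta$ if $(e,\sigma,\Downarrow)\Rightarrow_{GE}0,\delta$; $(c,\sigma,\Uparrow)\Rightarrow_G\sigma',\Uparrow$ for every store $\sigma'$. $\Rightarrow^{co}_G$ is the coinductive interpretation of these command rules (greatest relation such that every element is the conclusion of a rule instance whose command premises lie in it). *)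

theory Defs
  imports Main "HOL-Library.Finite_Map"
begin

type_synonym var = string

datatype val = Null | Num nat

datatype binop = Plus | Minus | Times

datatype expr = Val val | Var var | BinOp binop expr expr | Input

datatype com = Skip | Alloc var | Assign var expr | Seq com com
  | If expr com com | While expr com

type_synonym store = "(var, val) fmap"

fun apply_op :: "binop \<Rightarrow> nat \<Rightarrow> nat \<Rightarrow> nat" where
  "apply_op Plus a b = a + b"
| "apply_op Minus a b = a - b"
| "apply_op Times a b = a * b"

inductive eval_e :: "expr \<Rightarrow> store \<Rightarrow> val \<Rightarrow> bool" where
  "eval_e (Val v) \<sigma> v"
| "fmlookup \<sigma> x = Some v \<Longrightarrow> eval_e (Var x) \<sigma> v"
| "eval_e e1 \<sigma> (Num n1) \<Longrightarrow> eval_e e2 \<sigma> (Num n2) \<Longrightarrow>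
     eval_e (BinOp op e1 e2) \<sigma> (Num (apply_op op n1 n2))"
| "eval_e Input \<sigma> v"

inductive step :: "com \<Rightarrow> store \<Rightarrow> com \<Rightarrow> store \<Rightarrow> bool" where
  "x \<notin> fmdom' \<sigma> \<Longrightarrow> step (Alloc x) \<sigma> Skip (fmupd x Null \<sigma>)"
| "x \<in> fmdom' \<sigma> \<Longrightarrow> eval_e e \<sigma> v \<Longrightarrow> step (Assign x e) \<sigma> Skip (fmupd x v \<sigma>)"
| "step c1 \<sigma> c1' \<sigma>' \<Longrightarrow> step (Seq c1 c2) \<sigma> (Seq c1' c2) \<sigma>'"
| "step (Seq Skip c2) \<sigma> c2 \<sigma>"
| "eval_e e \<sigma> v \<Longrightarrow> v \<noteq> Num 0 \<Longrightarrow> step (If e c1 c2) \<sigma> c1 \<sigma>"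
| "eval_e e \<sigma> (Num 0) \<Longrightarrow> step (If e c1 c2) \<sigma> c2 \<sigma>"
| "eval_e e \<sigma> v \<Longrightarrow> v \<noteq> Num 0 \<Longrightarrow> step (While e c) \<sigma> (Seq c (While e c)) \<sigma>"
| "eval_e e \<sigma> (Num 0) \<Longrightarrow> step (While e c) \<sigma> Skip \<sigma>"

coinductive diverges :: "com \<Rightarrow> store \<Rightarrow> bool" where
  "step c \<sigma> c' \<sigma>' \<Longrightarrow> diverges c' \<sigma>' \<Longrightarrow> diverges c \<sigma>"

datatype flag = Conv | Div   (* Conv = \<Down>, Div = \<Up> *)

inductive eval_ge :: "expr \<Rightarrow> store \<Rightarrow> flag \<Rightarrow> val \<Rightarrow> flag \<Rightarrow> bool" where
  "eval_ge (Val v) \<sigma> Conv v Conv"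
| "fmlookup \<sigma> x = Some v \<Longrightarrow> eval_ge (Var x) \<sigma> Conv v Conv"
| "eval_ge e1 \<sigma> Conv (Num n1) \<delta> \<Longrightarrow> eval_ge e2 \<sigma> \<delta> (Num n2) \<delta>' \<Longrightarrow>
     eval_ge (BinOp op e1 e2) \<sigma> Conv (Num (apply_op op n1 n2)) \<delta>'"
| "eval_ge Input \<sigma> Conv v Conv"
| "eval_ge e \<sigma> Div v Div"

coinductive big_co :: "com \<Rightarrow> store \<Rightarrow> flag \<Rightarrow> store \<Rightarrow> flag \<Rightarrow> bool" where
  "big_co Skip \<sigma> Conv \<sigma> Conv"
| "x \<notin> fmdom' \<sigma> \<Longrightarrow> big_co (Alloc x) \<sigma> Conv (fmupd x Null \<sigma>) Conv"
| "x \<in> fmdom' \<sigma> \<Longrightarrow> eval_ge e \<sigma> Conv v \<delta> \<Longrightarrow> big_co (Assign x e) \<sigma> Conv (fmupd x v \<sigma>) \<delta>"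
| "big_co c1 \<sigma> Conv \<sigma>' \<delta> \<Longrightarrow> big_co c2 \<sigma>' \<delta> \<sigma>'' \<delta>' \<Longrightarrow> big_co (Seq c1 c2) \<sigma> Conv \<sigma>'' \<delta>'"
| "v \<noteq> Num 0 \<Longrightarrow> eval_ge e \<sigma> Conv v \<delta> \<Longrightarrow> big_co c1 \<sigma> \<delta> \<sigma>' \<delta>' \<Longrightarrow>
     big_co (If e c1 c2) \<sigma> Conv \<sigma>' \<delta>'"
| "eval_ge e \<sigma> Conv (Num 0) \<delta> \<Longrightarrow> big_co c2 \<sigma> \<delta> \<sigma>' \<delta>' \<Longrightarrow>
     big_co (If e c1 c2) \<sigma> Conv \<sigma>' \<delta>'"
| "eval_ge e \<sigma> Conv v \<delta> \<Longrightarrow> v \<noteq> Num 0 \<Longrightarrow> big_co c \<sigma> \<delta> \<sigma>' \<delta>' \<Longrightarrow>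
     big_co (While e c) \<sigma>' \<delta>' \<sigma>'' \<delta>'' \<Longrightarrow> big_co (While e c) \<sigma> Conv \<sigma>'' \<delta>''"
| "eval_ge e \<sigma> Conv (Num 0) \<delta> \<Longrightarrow> big_co (While e c) \<sigma> Conv \<sigma> \<delta>"
| "big_co c \<sigma> Div \<sigma>' Div"

end

theory Submission
  imports Defs
begin

text \<open>The only real work is in sequences (and loops, which
  unfold to sequences): a diverging \<open>Seq c1 c2\<close> either diverges inside \<open>c1\<close>, which the
  coinduction hypothesis turns into a \<open>Div\<close> flag for \<open>c1\<close>, or (classically, since this
  cannot be decided) \<open>c1\<close> reaches \<open>Skip\<close> in finitely many steps, which yields an ordinary
  terminating big-step derivation for \<open>c1\<close>, after which \<open>c2\<close> diverges.\<close>

inductive steps :: "com \<Rightarrow> store \<Rightarrow> com \<Rightarrow> store \<Rightarrow> bool" where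
  refl: "steps c \<sigma> c \<sigma>"
| step: "step c \<sigma> c' \<sigma>' \<Longrightarrow> steps c' \<sigma>' c'' \<sigma>'' \<Longrightarrow> steps c \<sigma> c'' \<sigma>''"

lemma eval_e_imp_eval_ge: "eval_e e \<sigma> v \<Longrightarrow> eval_ge e \<sigma> Conv v Conv"
  by (induction rule: eval_e.induct) (auto intro: eval_ge.intros)

lemma big_co_Div_not_Conv: "\<not> big_co c \<sigma> Div \<sigma>' Conv"
  by (auto elim: big_co.cases)

lemma big_co_step_converse:
  "step c \<sigma> c' \<sigma>' \<Longrightarrow> big_co c' \<sigma>' Conv \<sigma>'' Conv \<Longrightarrow> big_co c \<sigma> Conv \<sigma>'' Conv"
proof (induction arbitrary: \<sigma>'' rule: step.induct)
  case (2 x \<sigma> e v)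
  then have "\<sigma>'' = fmupd x v \<sigma>" by (auto elim: big_co.cases)
  with 2 show ?case by (auto intro!: big_co.intros eval_e_imp_eval_ge)
next
  case (3 c1 \<sigma> c1' \<sigma>' c2)
  then obtain \<sigma>m \<delta> where "big_co c1' \<sigma>' Conv \<sigma>m \<delta>" and rest: "big_co c2 \<sigma>m \<delta> \<sigma>'' Conv"
    by (auto elim: big_co.cases)
  moreover from rest have "\<delta> = Conv"
    using big_co_Div_not_Conv by (cases \<delta>) auto
  ultimately show ?case using 3 by (auto intro: big_co.intros)
next
  case (7 e \<sigma> v c)
  then obtain \<sigma>m \<delta> where "big_co c \<sigma> Conv \<sigma>m \<delta>" and rest: "big_co (While e c) \<sigma>m \<delta> \<sigma>'' Conv"
    by (auto elim: big_co.cases)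
  moreover from rest have "\<delta> = Conv"
    using big_co_Div_not_Conv by (cases \<delta>) auto
  ultimately show ?case using 7 by (auto intro: big_co.intros eval_e_imp_eval_ge)
next
  case (8 e \<sigma> c)
  then have "\<sigma>'' = \<sigma>" by (auto elim: big_co.cases)
  with 8 show ?case by (auto intro: big_co.intros eval_e_imp_eval_ge)
qed (auto elim: big_co.cases intro: big_co.intros eval_e_imp_eval_ge)

lemma steps_Skip_imp_big_co: "steps c \<sigma> Skip \<sigma>' \<Longrightarrow> big_co c \<sigma> Conv \<sigma>' Conv"
  by (induction c \<sigma> Skip \<sigma>' rule: steps.induct) (auto intro: big_co.intros big_co_step_converse)

lemma not_diverges_Skip: "\<not> diverges Skip \<sigma>"
  by (subst diverges.simps) (auto elim: step.cases)

lemma not_diverges_Alloc: "\<not> diverges (Alloc x) \<sigma>"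
  by (subst diverges.simps) (auto elim: step.cases simp: not_diverges_Skip)

lemma not_diverges_Assign: "\<not> diverges (Assign x e) \<sigma>"
  by (subst diverges.simps) (auto elim: step.cases simp: not_diverges_Skip)

lemma diverges_If_cases:
  assumes "diverges (If e c1 c2) \<sigma>"
  shows "(\<exists>v. eval_e e \<sigma> v \<and> v \<noteq> Num 0 \<and> diverges c1 \<sigma>) \<or> (eval_e e \<sigma> (Num 0) \<and> diverges c2 \<sigma>)"
  using assms by (subst (asm) diverges.simps) (auto elim: step.cases)

lemma diverges_While_cases:
  assumes "diverges (While e c) \<sigma>"
  shows "\<exists>v. eval_e e \<sigma> v \<and> v \<noteq> Num 0 \<and> diverges (Seq c (While e c)) \<sigma>"
  using assms by (subst (asm) diverges.simps) (auto elim: step.cases simp: not_diverges_Skip)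

lemma diverges_Seq_cases:
  assumes "diverges (Seq c1 c2) \<sigma>"
  shows "diverges c1 \<sigma> \<or> (\<exists>\<sigma>1. steps c1 \<sigma> Skip \<sigma>1 \<and> diverges c2 \<sigma>1)"
proof (rule disjCI)
  assume no_exit: "\<not> (\<exists>\<sigma>1. steps c1 \<sigma> Skip \<sigma>1 \<and> diverges c2 \<sigma>1)"
  from assms no_exit show "diverges c1 \<sigma>"
  proof (coinduction arbitrary: c1 \<sigma> rule: diverges.coinduct)
    case (diverges c1 \<sigma>)
    then obtain c' \<sigma>' where first: "step (Seq c1 c2) \<sigma> c' \<sigma>'" and rest: "diverges c' \<sigma>'"
      by (auto simp: diverges.simps[of "Seq c1 c2"])
    from first show ?case
    proof cases
      case (3 c1')
      with rest diverges(2) show ?thesis by (blast intro: steps.step)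
    next
      case 4
      with rest diverges(2) show ?thesis by (blast intro: steps.refl)
    qed
  qed
qed

theorem lemma26:
  fixes c :: com and \<sigma> \<sigma>' :: store
  assumes "diverges c \<sigma>"
  shows "big_co c \<sigma> Conv \<sigma>' Div"
  using assms
proof (coinduction arbitrary: c \<sigma> rule: big_co.coinduct)
  case (big_co c \<sigma>)
  show ?case
  proof (cases c)
    case (Seq c1 c2)
    with big_co consider "diverges c1 \<sigma>" | \<sigma>1 where "steps c1 \<sigma> Skip \<sigma>1" "diverges c2 \<sigma>1"
      using diverges_Seq_cases by blast
    then show ?thesis
    proof cases
      case 1
      with Seq show ?thesis by (auto intro: big_co.intros)
    next
      case 2
      then have "big_co c1 \<sigma> Conv \<sigma>1 Conv" by (blast intro: steps_Skip_imp_big_co)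
      with 2 Seq show ?thesis by auto
    qed
  next
    case (If e c1 c2)
    with big_co show ?thesis by (auto dest!: diverges_If_cases intro: eval_e_imp_eval_ge)
  next
    case (While e c0)
    with big_co obtain v where cond: "eval_ge e \<sigma> Conv v Conv" "v \<noteq> Num 0"
      and body: "diverges (Seq c0 c) \<sigma>"
      by (blast dest: diverges_While_cases eval_e_imp_eval_ge)
    from body consider "diverges c0 \<sigma>" | \<sigma>1 where "steps c0 \<sigma> Skip \<sigma>1" "diverges c \<sigma>1"
      using diverges_Seq_cases by blast
    then show ?thesis
    proof cases
      case 1
      have "big_co c \<sigma>' Div \<sigma>' Div" by (rule big_co.intros)
      with 1 While cond show ?thesis by blast
    next
      case 2
      then have "big_co c0 \<sigma> Conv \<sigma>1 Conv" by (blast intro: steps_Skip_imp_big_co)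
      with 2 While cond show ?thesis by blast
    qed
  qed (use big_co in \<open>auto simp: not_diverges_Skip not_diverges_Alloc not_diverges_Assign\<close>)
qed

end
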